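(* Let $S_{r,N}$ be an atomic exponential Puiseux semiring. Then $\mathsf{c}(S_{r,N})=0$ if $r\in\mathbb{N}$, and $\mathsf{c}(S_{r,N})=\max(\mathsf{n}(r),\mathsf{d}(r))^{\delta_0}$ if $r\notin\mathbb{N}$.
   Context: $\mathbb{N}=\{0,1,2,\dots\}$. A numerical monoid $N$ is an additive submonoid of $\mathbb{N}$ with finite complement in $\mathbb{N}$; let $s_0=0<s_1<\cdots$ be its elements and $\delta_0=s_1-s_0=s_1$ (the smallest positive element of $N$). For $r\in\mathbb{Q}_{>0}$ write $r=\mathsf{n}(r)/\mathsf{d}(r)$ in lowest terms. The exponential Puiseux semiring $S_{r,N}$ is the additive submonoid of $\mathbb{Q}_{\ge0}$ generated by $\{r^k:k\in N\}$ (equal to $\mathbb{N}$ if $r\in\mathbb{N}$; atomic for $r\notin\mathbb{N}$ iff $\mathsf{n}(r)>1$). For factorizations $z=\sum\alpha_a a$, $z'=\sum\beta_a a$ of an element of an atomic monoid, $\gcd(z,z')=\sum\min(\alpha_a,\beta_a)a$ and $\mathsf{d}(z,z')=\max(|z|,|z'|)-|\gcd(z,z')|$. The catenary degree $\mathsf{c}(x)$ is the least $n\in\mathbb{N}\cup\{\infty\}$ such that any two factorizations of $x$ are joined by a chain of factorizations of $x$ with consecutive distances at most $n$; $\mathsf{c}(M)=\sup_{x\in M}\mathsf{c}(x)$. *)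

theory Defs
  imports Complex_Main "HOL-Library.Multiset" "HOL-Library.Extended_Nat"
begin

definition numerical_monoid :: "nat set \<Rightarrow> bool" where
  "numerical_monoid N \<longleftrightarrow> 0 \<in> N \<and> (\<forall>a\<in>N. \<forall>b\<in>N. a + b \<in> N) \<and> finite (UNIV - N)"

definition delta0 :: "nat set \<Rightarrow> nat" where
  "delta0 N = (LEAST k. k \<in> N \<and> 0 < k)"

inductive_set gen_monoid :: "rat set \<Rightarrow> rat set" for G :: "rat set" where
  zero: "0 \<in> gen_monoid G"
| add_gen: "g \<in> G \<Longrightarrow> x \<in> gen_monoid G \<Longrightarrow> g + x \<in> gen_monoid G"

definition exp_puiseux :: "rat \<Rightarrow> nat set \<Rightarrow> rat set" where
  "exp_puiseux r N = gen_monoid {r ^ k | k. k \<in> N}"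

definition numer :: "rat \<Rightarrow> nat" where "numer r = nat (fst (quotient_of r))"
definition denom :: "rat \<Rightarrow> nat" where "denom r = nat (snd (quotient_of r))"

text \<open>Atoms of a submonoid M of Q_{>=0} (the only unit is 0).\<close>
definition atoms :: "rat set \<Rightarrow> rat set" where
  "atoms M = {a \<in> M. a \<noteq> 0 \<and> (\<forall>b\<in>M. \<forall>c\<in>M. a = b + c \<longrightarrow> b = 0 \<or> c = 0)}"

definition factorizations :: "rat set \<Rightarrow> rat \<Rightarrow> rat multiset set" where
  "factorizations M x = {z. set_mset z \<subseteq> atoms M \<and> sum_mset z = x}"

definition atomic :: "rat set \<Rightarrow> bool" where
  "atomic M \<longleftrightarrow> (\<forall>x\<in>M. x \<noteq> 0 \<longrightarrow> factorizations M x \<noteq> {})"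

definition fdist :: "rat multiset \<Rightarrow> rat multiset \<Rightarrow> nat" where
  "fdist z z' = max (size z) (size z') - size (z \<inter># z')"

definition has_chain :: "rat set \<Rightarrow> rat \<Rightarrow> enat \<Rightarrow> rat multiset \<Rightarrow> rat multiset \<Rightarrow> bool" where
  "has_chain M x n z z' \<longleftrightarrow> (\<exists>zs. zs \<noteq> [] \<and> hd zs = z \<and> last zs = z' \<and>
      set zs \<subseteq> factorizations M x \<and>
      (\<forall>i. Suc i < length zs \<longrightarrow> enat (fdist (zs ! i) (zs ! Suc i)) \<le> n))"

definition catenary_elem :: "rat set \<Rightarrow> rat \<Rightarrow> enat" where
  "catenary_elem M x = Inf {n. \<forall>z\<in>factorizations M x. \<forall>z'\<in>factorizations M x. has_chain M x n z z'}"

definition catenary_degree :: "rat set \<Rightarrow> enat" where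
  "catenary_degree M = (SUP x\<in>M. catenary_elem M x)"

end

(*
  Write r = n / d in lowest terms. For d >= 2 and n >= 2 the atoms of S_{r,N} are exactly the
  powers r^k with k in N, so factorizations are multisets of exponents. Clearing denominators
  shows that if two factorizations of the same element have no atom in common and i is the
  smallest exponent occurring, then i occurs on one side only, and there a multiple of n^s times,
  where i + s is the next element of N. Hence n^s copies of r^i can be traded for d^s copies of
  r^(i+s), a step of distance at most max(n,d)^delta0, and repeating such trades connects any two
  factorizations. Conversely, the factorization of n^delta0 into ones shares no atom with any
  other factorization of it, and all those have length at least d^delta0, which gives the
  lower bound. For integral r the only atom is 1, so factorizations are unique, and for n = 1
  no atoms exist at all.
*)

theory Submission
  imports Defs
begin

section \<open>Factorizations as multisets of exponents\<close>

definition pow_mset :: "rat \<Rightarrow> nat multiset \<Rightarrow> rat multiset" where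
  "pow_mset r Z = image_mset (\<lambda>k. r ^ k) Z"

definition pow_sum :: "rat \<Rightarrow> nat multiset \<Rightarrow> rat" where
  "pow_sum r Z = sum_mset (pow_mset r Z)"

lemma pow_mset_simps [simp]:
  "pow_mset r {#} = {#}"
  "pow_mset r (add_mset k Z) = add_mset (r ^ k) (pow_mset r Z)"
  "pow_mset r (A + B) = pow_mset r A + pow_mset r B"
  "pow_mset r (replicate_mset m k) = replicate_mset m (r ^ k)"
  "size (pow_mset r Z) = size Z"
  by (simp_all add: pow_mset_def)

lemma pow_sum_simps [simp]:
  "pow_sum r {#} = 0"
  "pow_sum r (add_mset k Z) = r ^ k + pow_sum r Z"
  "pow_sum r (A + B) = pow_sum r A + pow_sum r B"
  "pow_sum r (replicate_mset m k) = of_nat m * r ^ k"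
  by (simp_all add: pow_sum_def)

lemma pow_sum_nonneg: "0 < r \<Longrightarrow> 0 \<le> pow_sum r Z"
  by (induction Z) auto

lemma pow_sum_pos: "0 < r \<Longrightarrow> Z \<noteq> {#} \<Longrightarrow> 0 < pow_sum r Z"
  by (induction Z) (auto intro: add_pos_nonneg pow_sum_nonneg)

lemma pow_sum_eq_0_iff: "0 < r \<Longrightarrow> pow_sum r Z = 0 \<longleftrightarrow> Z = {#}"
  using pow_sum_pos by fastforce

lemma pow_sum_le_size_times:
  "\<forall>k\<in>#Z. r ^ k \<le> b \<Longrightarrow> pow_sum r Z \<le> of_nat (size Z) * b"
  by (induction Z) (auto simp: algebra_simps add_mono)

lemma set_mset_subset_imageE:
  assumes "set_mset z \<subseteq> f ` A"
  obtains Z where "set_mset Z \<subseteq> A" "z = image_mset f Z"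
  using assms
proof (induction z arbitrary: thesis)
  case empty
  then show ?case by (metis empty_subsetI image_mset_empty set_mset_empty)
next
  case (add x z)
  then obtain Z where "set_mset Z \<subseteq> A" "z = image_mset f Z" by auto
  moreover obtain k where "k \<in> A" "x = f k" using add.prems(2) by auto
  ultimately show ?case using add.prems(1)[of "add_mset k Z"] by auto
qed

lemma exp_puiseux_iff:
  "x \<in> exp_puiseux r N \<longleftrightarrow> (\<exists>Z. set_mset Z \<subseteq> N \<and> x = pow_sum r Z)"
proof
  assume "x \<in> exp_puiseux r N"
  then show "\<exists>Z. set_mset Z \<subseteq> N \<and> x = pow_sum r Z"
    unfolding exp_puiseux_def
  proof induction
    case zero
    show ?case by (intro exI[of _ "{#}"]) simp
  next
    case (add_gen g x)
    then obtain k Z where "k \<in> N" "g = r ^ k" "set_mset Z \<subseteq> N" "x = pow_sum r Z" by auto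
    then show ?case by (intro exI[of _ "add_mset k Z"]) auto
  qed
next
  assume "\<exists>Z. set_mset Z \<subseteq> N \<and> x = pow_sum r Z"
  then obtain Z where "set_mset Z \<subseteq> N" "x = pow_sum r Z" by blast
  moreover have "set_mset Z \<subseteq> N \<Longrightarrow> pow_sum r Z \<in> exp_puiseux r N"
    unfolding exp_puiseux_def
    by (induction Z) (auto intro: gen_monoid.intros)
  ultimately show "x \<in> exp_puiseux r N" by simp
qed

lemma pow_sum_in_exp_puiseux: "set_mset Z \<subseteq> N \<Longrightarrow> pow_sum r Z \<in> exp_puiseux r N"
  using exp_puiseux_iff by blast

lemma of_nat_in_exp_puiseux: "0 \<in> N \<Longrightarrow> of_nat m \<in> exp_puiseux r N"
  using pow_sum_in_exp_puiseux[of "replicate_mset m 0" N r] by simp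

lemma atoms_exp_puiseux_subset:
  assumes "0 < r"
  shows "atoms (exp_puiseux r N) \<subseteq> (\<lambda>k. r ^ k) ` N"
proof
  fix a assume a: "a \<in> atoms (exp_puiseux r N)"
  then obtain Z where Z: "set_mset Z \<subseteq> N" "a = pow_sum r Z"
    unfolding atoms_def exp_puiseux_iff by blast
  have "Z \<noteq> {#}" using a Z unfolding atoms_def by auto
  then obtain k Z' where Z': "Z = add_mset k Z'" by (meson multiset_cases)
  have "r ^ k \<in> exp_puiseux r N" "pow_sum r Z' \<in> exp_puiseux r N"
    using Z Z' pow_sum_in_exp_puiseux[of "{#k#}" N r] pow_sum_in_exp_puiseux[of Z' N r] by auto
  moreover have "a = r ^ k + pow_sum r Z'" using Z Z' by simp
  ultimately have "r ^ k = 0 \<or> pow_sum r Z' = 0"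
    using a unfolding atoms_def by blast
  then have "pow_sum r Z' = 0" using assms by simp
  with Z Z' assms show "a \<in> (\<lambda>k. r ^ k) ` N" by (simp add: pow_sum_eq_0_iff)
qed

lemma factorization_exp_puiseuxE:
  assumes "0 < r" "z \<in> factorizations (exp_puiseux r N) x"
  obtains Z where "set_mset Z \<subseteq> N" "z = pow_mset r Z" "pow_sum r Z = x"
proof -
  have "set_mset z \<subseteq> (\<lambda>k. r ^ k) ` N"
    using assms atoms_exp_puiseux_subset[of r N] unfolding factorizations_def by blast
  then obtain Z where "set_mset Z \<subseteq> N" "z = pow_mset r Z"
    unfolding pow_mset_def by (rule set_mset_subset_imageE)
  with assms(2) show thesis using that unfolding factorizations_def pow_sum_def by blast
qed

section \<open>Chains of factorizations\<close>

inductive fchain :: "rat set \<Rightarrow> nat \<Rightarrow> rat multiset \<Rightarrow> rat multiset \<Rightarrow> bool" for M K where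
  refl: "fchain M K z z"
| step: "fdist z y \<le> K \<Longrightarrow> set_mset y \<subseteq> atoms M \<Longrightarrow> sum_mset y = sum_mset z \<Longrightarrow>
    fchain M K y z' \<Longrightarrow> fchain M K z z'"

lemma fdist_commute: "fdist z z' = fdist z' z"
  unfolding fdist_def by (simp add: max.commute multiset_inter_commute)

lemma fdist_add_mset_same [simp]: "fdist (add_mset a z) (add_mset a z') = fdist z z'"
  unfolding fdist_def by simp

lemma fdist_add_common_le: "fdist (C + A) (C + B) \<le> max (size A) (size B)"
proof -
  have "C \<subseteq># (C + A) \<inter># (C + B)" by simp
  then have "size C \<le> size ((C + A) \<inter># (C + B))" by (rule size_mset_mono)
  then show ?thesis unfolding fdist_def by simp
qed

lemma fchain_single:
  "fdist z y \<le> K \<Longrightarrow> set_mset y \<subseteq> atoms M \<Longrightarrow> sum_mset y = sum_mset z \<Longrightarrow> fchain M K z y"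
  by (rule fchain.step[OF _ _ _ fchain.refl])

lemma fchain_trans: "fchain M K z y \<Longrightarrow> fchain M K y w \<Longrightarrow> fchain M K z w"
  by (induction rule: fchain.induct) (auto intro: fchain.step)

lemma fchain_sym: "fchain M K z z' \<Longrightarrow> set_mset z \<subseteq> atoms M \<Longrightarrow> fchain M K z' z"
proof (induction rule: fchain.induct)
  case (refl z)
  show ?case by (rule fchain.refl)
next
  case (step z y z')
  then have "fchain M K y z"
    using fchain_single[of y z K M] fdist_commute[of y z] by simp
  with step show ?case by (blast intro: fchain_trans)
qed

lemma fchain_add_mset:
  "fchain M K z z' \<Longrightarrow> a \<in> atoms M \<Longrightarrow> fchain M K (add_mset a z) (add_mset a z')"
proof (induction rule: fchain.induct)
  case (refl z)
  show ?case by (rule fchain.refl)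
next
  case (step z y z')
  show ?case
  proof (rule fchain.step[of _ "add_mset a y"])
    show "fdist (add_mset a z) (add_mset a y) \<le> K" using step.hyps(1) by simp
    show "set_mset (add_mset a y) \<subseteq> atoms M" using step.hyps(2) step.prems by simp
    show "sum_mset (add_mset a y) = sum_mset (add_mset a z)" using step.hyps(3) by simp
    show "fchain M K (add_mset a y) (add_mset a z')" using step.IH step.prems .
  qed
qed

lemma has_chain_if_fchain:
  assumes "fchain M K z z'" "z \<in> factorizations M x"
  shows "has_chain M x (enat K) z z'"
  using assms
proof (induction rule: fchain.induct)
  case (refl z)
  then show ?case unfolding has_chain_def by (intro exI[of _ "[z]"]) auto
next
  case (step z y z')
  then have "y \<in> factorizations M x" unfolding factorizations_def by simp
  with step.IH obtain zs where zs: "zs \<noteq> []" "hd zs = y" "last zs = z'"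
      "set zs \<subseteq> factorizations M x"
      "\<forall>i. Suc i < length zs \<longrightarrow> enat (fdist (zs ! i) (zs ! Suc i)) \<le> enat K"
    unfolding has_chain_def by blast
  have "enat (fdist ((z # zs) ! i) ((z # zs) ! Suc i)) \<le> enat K"
    if "Suc i < length (z # zs)" for i
  proof (cases i)
    case 0
    then show ?thesis using zs(1,2) step.hyps(1) by (simp add: hd_conv_nth)
  next
    case (Suc i')
    then show ?thesis using zs(5) that by simp
  qed
  with zs step.prems show ?case
    unfolding has_chain_def by (intro exI[of _ "z # zs"]) auto
qed

lemma list_leaves_hd:
  "xs \<noteq> [] \<Longrightarrow> hd xs = a \<Longrightarrow> last xs \<noteq> a \<Longrightarrow>
    \<exists>j. Suc j < length xs \<and> xs ! j = a \<and> xs ! Suc j \<noteq> a"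
proof (induction xs)
  case Nil
  then show ?case by simp
next
  case (Cons x xs)
  then have "xs \<noteq> []" by (metis last_ConsL list.sel(1))
  show ?case
  proof (cases "hd xs = a")
    case True
    with Cons \<open>xs \<noteq> []\<close> obtain j where "Suc j < length xs" "xs ! j = a" "xs ! Suc j \<noteq> a"
      by auto
    then show ?thesis by (intro exI[of _ "Suc j"]) simp
  next
    case False
    with Cons \<open>xs \<noteq> []\<close> show ?thesis by (intro exI[of _ 0]) (simp add: hd_conv_nth)
  qed
qed

lemma catenary_elem_le:
  assumes "\<forall>z\<in>factorizations M x. \<forall>z'\<in>factorizations M x. has_chain M x (enat K) z z'"
  shows "catenary_elem M x \<le> enat K"
  unfolding catenary_elem_def using assms by (intro Inf_lower) simp

lemma catenary_elem_ge:
  assumes z: "z \<in> factorizations M x" and z': "z' \<in> factorizations M x" and "z \<noteq> z'"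
    and far: "\<forall>w\<in>factorizations M x. w \<noteq> z \<longrightarrow> K \<le> fdist z w"
  shows "enat K \<le> catenary_elem M x"
  unfolding catenary_elem_def
proof (rule Inf_greatest)
  fix m assume "m \<in> {n. \<forall>z\<in>factorizations M x. \<forall>z'\<in>factorizations M x. has_chain M x n z z'}"
  with z z' obtain zs where zs: "zs \<noteq> []" "hd zs = z" "last zs = z'" "set zs \<subseteq> factorizations M x"
      "\<forall>i. Suc i < length zs \<longrightarrow> enat (fdist (zs ! i) (zs ! Suc i)) \<le> m"
    unfolding has_chain_def by blast
  obtain j where j: "Suc j < length zs" "zs ! j = z" "zs ! Suc j \<noteq> z"
    using list_leaves_hd[of zs z] zs(1-3) \<open>z \<noteq> z'\<close> by blast
  have "K \<le> fdist (zs ! j) (zs ! Suc j)"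
    using far j zs(4) nth_mem[OF j(1)] by blast
  moreover have "enat (fdist (zs ! j) (zs ! Suc j)) \<le> m" using zs(5) j(1) by blast
  ultimately show "enat K \<le> m" by (meson enat_ord_simps(1) order_trans)
qed

lemma catenary_elem_unique:
  assumes "\<forall>z\<in>factorizations M x. \<forall>z'\<in>factorizations M x. z = z'"
  shows "catenary_elem M x = 0"
proof -
  have "\<forall>z\<in>factorizations M x. \<forall>z'\<in>factorizations M x. has_chain M x (enat 0) z z'"
    using assms unfolding has_chain_def by (intro ballI, intro exI[of _ "[_]"]) auto
  then show ?thesis using catenary_elem_le[of M x 0] by (simp add: zero_enat_def[symmetric])
qed

section \<open>Sums of powers of \<open>n / d\<close>\<close>

lemma pow_sum_times_denom_power:
  assumes "0 < d" "r = of_nat n / of_nat d" "\<forall>k\<in>#W. e \<le> k"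
  shows "\<exists>(A::int) L. pow_sum r W * of_nat d ^ L = of_nat n ^ e * of_int A"
  using assms(3)
proof (induction W)
  case empty
  show ?case by (intro exI[of _ 0]) simp
next
  case (add k W)
  then obtain A L where AL: "pow_sum r W * of_nat d ^ L = of_nat n ^ e * of_int A" and "e \<le> k"
    by auto
  have rk: "r ^ k * of_nat d ^ k = of_nat n ^ e * of_nat n ^ (k - e)"
    using assms(1,2) \<open>e \<le> k\<close> by (simp add: power_divide flip: power_add)
  have "pow_sum r (add_mset k W) * of_nat d ^ (L + k)
      = r ^ k * of_nat d ^ k * of_nat d ^ L + pow_sum r W * of_nat d ^ L * of_nat d ^ k"
    by (simp add: algebra_simps power_add)
  also have "\<dots> = of_nat n ^ e * of_int (int n ^ (k - e) * int d ^ L + A * int d ^ k)"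
    by (simp add: rk AL algebra_simps)
  finally show ?case by blast
qed

lemma power_dvd_if_pow_sum_diff:
  assumes "0 < d" "r = of_nat n / of_nat d" "coprime n d"
    and "\<forall>k\<in>#W. e \<le> k" "\<forall>k\<in>#W'. e \<le> k"
    and I: "(pow_sum r W - pow_sum r W') * of_nat d ^ j = of_int I"
  shows "int n ^ e dvd I"
proof -
  obtain A L where A: "pow_sum r W * of_nat d ^ L = of_nat n ^ e * of_int A"
    using pow_sum_times_denom_power[OF assms(1,2,4)] by blast
  obtain A' L' where A': "pow_sum r W' * of_nat d ^ L' = of_nat n ^ e * of_int A'"
    using pow_sum_times_denom_power[OF assms(1,2,5)] by blast
  have "(of_int (I * int d ^ (L + L')) :: rat)
      = (pow_sum r W * of_nat d ^ L) * of_nat d ^ L' * of_nat d ^ j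
        - (pow_sum r W' * of_nat d ^ L') * of_nat d ^ L * of_nat d ^ j"
    by (simp add: I[symmetric] power_add algebra_simps)
  also have "\<dots> = of_int (int n ^ e * (A * int d ^ L' * int d ^ j - A' * int d ^ L * int d ^ j))"
    by (simp add: A A' algebra_simps)
  finally have "int n ^ e dvd I * int d ^ (L + L')"
    by (metis dvd_triv_left of_int_eq_iff)
  moreover have "coprime (int n ^ e) (int d ^ (L + L'))" using assms(3) by simp
  ultimately show ?thesis using coprime_dvd_mult_left_iff by blast
qed

lemma pow_sum_times_denom_power_low:
  assumes "0 < d" "r = of_nat n / of_nat d" "\<forall>k\<in>#W. k < j"
  shows "\<exists>m. pow_sum r W * of_nat d ^ j = of_nat (d * m)"
  using assms(3)
proof (induction W)
  case empty
  show ?case by (intro exI[of _ 0]) simp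
next
  case (add k W)
  then obtain m where m: "pow_sum r W * of_nat d ^ j = of_nat (d * m)" and "k < j" by auto
  then have "j = k + 1 + (j - k - 1)" by simp
  then have dj: "(of_nat d :: rat) ^ j = of_nat d ^ k * of_nat d * of_nat d ^ (j - k - 1)"
    by (metis power_add power_one_right)
  have rk: "r ^ k * of_nat d ^ k = of_nat n ^ k" using assms(1,2) by (simp add: power_divide)
  have "pow_sum r (add_mset k W) * of_nat d ^ j
      = r ^ k * of_nat d ^ k * of_nat d * of_nat d ^ (j - k - 1) + pow_sum r W * of_nat d ^ j"
    by (simp add: algebra_simps dj)
  also have "\<dots> = of_nat (d * (n ^ k * d ^ (j - k - 1) + m))" by (simp add: rk m algebra_simps)
  finally show ?case by blast
qed

section \<open>Numerical monoids\<close>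

lemma next_element_of_additive:
  fixes N :: "nat set"
  assumes "\<forall>a\<in>N. \<forall>b\<in>N. a + b \<in> N" "i \<in> N" "e \<in> N" "0 < e"
  obtains s where "0 < s" "s \<le> e" "i + s \<in> N" "\<forall>k\<in>N. i < k \<longrightarrow> i + s \<le> k"
proof -
  define s where "s = (LEAST t. 0 < t \<and> i + t \<in> N)"
  have e: "0 < e \<and> i + e \<in> N" using assms by blast
  have s: "0 < s \<and> i + s \<in> N" unfolding s_def using e by (rule LeastI)
  have "s \<le> e" unfolding s_def using e by (rule Least_le)
  have "i + s \<le> k" if "k \<in> N" "i < k" for k
    using Least_le[of "\<lambda>t. 0 < t \<and> i + t \<in> N" "k - i"] that unfolding s_def by simp
  with s \<open>s \<le> e\<close> show thesis using that by blast
qed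

lemma delta0_le: "k \<in> N \<Longrightarrow> 0 < k \<Longrightarrow> delta0 N \<le> k"
  unfolding delta0_def by (simp add: Least_le)

lemma delta0_mem:
  assumes "numerical_monoid N"
  shows "delta0 N \<in> N" "0 < delta0 N"
proof -
  obtain k0 where "UNIV - N \<subseteq> {..<k0}"
    using assms finite_nat_bounded unfolding numerical_monoid_def by blast
  then have "Suc k0 \<in> N \<and> 0 < Suc k0" by auto
  then have "delta0 N \<in> N \<and> 0 < delta0 N" unfolding delta0_def by (rule LeastI)
  then show "delta0 N \<in> N" "0 < delta0 N" by auto
qed

section \<open>Non-integral bases\<close>

locale nonintegral_base =
  fixes n d :: nat and r :: rat
  assumes n_ge_2: "2 \<le> n" and d_ge_2: "2 \<le> d" and coprime_nd: "coprime n d"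
    and r_eq: "r = of_nat n / of_nat d"
begin

lemma r_pos: "0 < r"
  using n_ge_2 d_ge_2 r_eq by simp

lemma r_power_times_denom_power: "r ^ k * of_nat d ^ k = of_nat n ^ k"
  using d_ge_2 r_eq by (simp add: power_divide)

lemma r_power_inj: "r ^ k = r ^ j \<longleftrightarrow> k = j"
proof -
  have "n \<noteq> d" using coprime_nd d_ge_2 by auto
  then have "r \<noteq> 1" using r_eq d_ge_2 by simp
  then show ?thesis using r_pos by (simp add: power_inject_exp')
qed

lemma n_power_dvd_if_pow_sum_diff:
  "\<forall>k\<in>#W. e \<le> k \<Longrightarrow> \<forall>k\<in>#W'. e \<le> k \<Longrightarrow> (pow_sum r W - pow_sum r W') * of_nat d ^ j = of_int I \<Longrightarrow>
    int n ^ e dvd I"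
  using power_dvd_if_pow_sum_diff[of d r n] d_ge_2 r_eq coprime_nd by simp

text \<open>Clearing denominators, the exponents below \<open>j\<close> contribute a multiple of \<open>d\<close> and
  those above \<open>j\<close> a multiple of \<open>n ^ (j + 1)\<close>; neither can account for \<open>n ^ j\<close>.\<close>

lemma pow_sum_neq_power:
  assumes "2 \<le> size Z"
  shows "pow_sum r Z \<noteq> r ^ j"
proof
  assume eq: "pow_sum r Z = r ^ j"
  show False
  proof (cases "j \<in># Z")
    case True
    then have "pow_sum r (Z - {#j#}) = 0"
      using eq pow_sum_simps(2)[of r j "Z - {#j#}"] insert_DiffM[OF True] by simp
    moreover have "size (Z - {#j#}) \<noteq> 0" using assms size_Diff_singleton[OF True] by simp
    then have "Z - {#j#} \<noteq> {#}" by auto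
    ultimately show False using r_pos by (simp add: pow_sum_eq_0_iff)
  next
    case False
    define Lo where "Lo = filter_mset (\<lambda>k. k < j) Z"
    define Hi where "Hi = filter_mset (\<lambda>k. \<not> k < j) Z"
    have Z: "Z = Lo + Hi" unfolding Lo_def Hi_def by simp
    have Hi_ge: "\<forall>k\<in>#Hi. j + 1 \<le> k"
    proof
      fix k assume "k \<in># Hi"
      then have "k \<in># Z" "\<not> k < j" unfolding Hi_def by auto
      with False show "j + 1 \<le> k" by (cases "k = j") auto
    qed
    obtain m where m: "pow_sum r Lo * of_nat d ^ j = of_nat (d * m)"
      using pow_sum_times_denom_power_low[of d r n Lo j] d_ge_2 r_eq unfolding Lo_def by auto
    define I where "I = int n ^ j - int (d * m)"
    have "pow_sum r Hi = r ^ j - pow_sum r Lo" using eq Z by simp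
    then have "pow_sum r Hi * of_nat d ^ j = r ^ j * of_nat d ^ j - pow_sum r Lo * of_nat d ^ j"
      by (simp add: left_diff_distrib)
    then have HI: "(pow_sum r Hi - pow_sum r {#}) * of_nat d ^ j = of_int I"
      using m r_power_times_denom_power[of j] unfolding I_def by simp
    have dvd: "int n ^ (j + 1) dvd I" using n_power_dvd_if_pow_sum_diff[OF Hi_ge _ HI] by simp
    have "0 \<le> pow_sum r Hi * of_nat d ^ j" using pow_sum_nonneg[OF r_pos] by simp
    then have "0 \<le> I" using HI by simp
    moreover have "int n ^ j < int n ^ (j + 1)" using n_ge_2 by simp
    then have "I < int n ^ (j + 1)" unfolding I_def by linarith
    ultimately have "I = 0" using dvd zdvd_imp_le[of "int n ^ (j + 1)" I] by fastforce
    then have "int (n ^ j) = int (d * m)" unfolding I_def by simp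
    then have "d dvd n ^ j" by (simp only: of_nat_eq_iff dvd_triv_left)
    moreover have "coprime d (n ^ j)" using coprime_nd by (simp add: coprime_commute)
    ultimately show False using d_ge_2 coprime_common_divisor[of d "n ^ j" d] by simp
  qed
qed

lemma atoms_exp_puiseux: "atoms (exp_puiseux r N) = (\<lambda>k. r ^ k) ` N"
proof
  show "atoms (exp_puiseux r N) \<subseteq> (\<lambda>k. r ^ k) ` N" using atoms_exp_puiseux_subset[OF r_pos] .
  show "(\<lambda>k. r ^ k) ` N \<subseteq> atoms (exp_puiseux r N)"
  proof
    fix a assume "a \<in> (\<lambda>k. r ^ k) ` N"
    then obtain j where j: "j \<in> N" "a = r ^ j" by auto
    have "b = 0 \<or> c = 0" if bc: "b \<in> exp_puiseux r N" "c \<in> exp_puiseux r N" "a = b + c" for b c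
    proof -
      obtain B C where "b = pow_sum r B" "c = pow_sum r C"
        using bc(1,2) unfolding exp_puiseux_iff by blast
      moreover have "pow_sum r (B + C) = r ^ j" using bc(3) j calculation by simp
      then have "\<not> 2 \<le> size B + size C" using pow_sum_neq_power[of "B + C" j] by auto
      then have "size B = 0 \<or> size C = 0" by arith
      ultimately show ?thesis by auto
    qed
    moreover have "a \<in> exp_puiseux r N" using j pow_sum_in_exp_puiseux[of "{#j#}" N r] by simp
    moreover have "a \<noteq> 0" using j r_pos by simp
    ultimately show "a \<in> atoms (exp_puiseux r N)" unfolding atoms_def by blast
  qed
qed

text \<open>The base \<open>d + 1\<close> is what makes every trade decrease the weight, as
  \<open>d ^ s < (d + 1) ^ s\<close>.\<close>

definition weight :: "nat \<Rightarrow> nat multiset \<Rightarrow> nat" where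
  "weight J Z = (\<Sum>k\<in>#Z. (d + 1) ^ (J - k))"

lemma weight_simps [simp]:
  "weight J (A + B) = weight J A + weight J B"
  "weight J (replicate_mset m k) = m * (d + 1) ^ (J - k)"
  "weight J (add_mset k Z) = (d + 1) ^ (J - k) + weight J Z"
  by (simp_all add: weight_def)

definition trade :: "nat \<Rightarrow> nat \<Rightarrow> nat multiset \<Rightarrow> nat multiset" where
  "trade i s Z = Z - replicate_mset (n ^ s) i + replicate_mset (d ^ s) (i + s)"

lemma pow_sum_trade:
  assumes "replicate_mset (n ^ s) i \<subseteq># Z"
  shows "pow_sum r (trade i s Z) = pow_sum r Z"
proof -
  have "of_nat (d ^ s) * r ^ (i + s) = of_nat (n ^ s) * r ^ i"
    using d_ge_2 r_eq by (simp add: power_add power_divide)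
  moreover have "pow_sum r Z = pow_sum r (Z - replicate_mset (n ^ s) i) + of_nat (n ^ s) * r ^ i"
    using assms by (metis pow_sum_simps(3,4) subset_mset.diff_add)
  ultimately show ?thesis unfolding trade_def by simp
qed

lemma fdist_trade:
  assumes "replicate_mset (n ^ s) i \<subseteq># Z"
  shows "fdist (pow_mset r Z) (pow_mset r (trade i s Z)) \<le> max n d ^ s"
proof -
  define C where "C = pow_mset r (Z - replicate_mset (n ^ s) i)"
  have "pow_mset r Z = C + replicate_mset (n ^ s) (r ^ i)"
    unfolding C_def using assms by (metis pow_mset_simps(3,4) subset_mset.diff_add)
  moreover have "pow_mset r (trade i s Z) = C + replicate_mset (d ^ s) (r ^ (i + s))"
    unfolding C_def trade_def by simp
  ultimately have "fdist (pow_mset r Z) (pow_mset r (trade i s Z)) \<le> max (n ^ s) (d ^ s)"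
    using fdist_add_common_le[of C "replicate_mset (n ^ s) (r ^ i)" "replicate_mset (d ^ s) (r ^ (i + s))"]
    by simp
  also have "\<dots> \<le> max n d ^ s"
    using power_mono[of n "max n d" s] power_mono[of d "max n d" s] by simp
  finally show ?thesis .
qed

lemma weight_trade:
  assumes "replicate_mset (n ^ s) i \<subseteq># Z" "0 < s" "i + s \<le> J"
  shows "weight J (trade i s Z) < weight J Z"
proof -
  define b where "b = (d + 1) ^ (J - (i + s))"
  define W where "W = weight J (Z - replicate_mset (n ^ s) i)"
  have "J - i = s + (J - (i + s))" using assms(3) by simp
  then have "(d + 1) ^ (J - i) = (d + 1) ^ s * b" unfolding b_def by (simp only: power_add)
  then have Z: "weight J Z = W + n ^ s * ((d + 1) ^ s * b)"
    unfolding W_def using assms(1) by (metis weight_simps(1,2) subset_mset.diff_add)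
  have "d ^ s * b < (d + 1) ^ s * b" unfolding b_def using assms(2) by (simp add: power_strict_mono)
  also have "\<dots> \<le> n ^ s * ((d + 1) ^ s * b)" using n_ge_2 by simp
  finally show ?thesis unfolding Z trade_def W_def b_def by simp
qed

lemma power_dvd_count:
  assumes eq: "pow_sum r Z = pow_sum r Z'"
    and Z: "\<forall>k\<in>#Z. i + s \<le> k" and Z': "\<forall>k\<in>#Z'. k \<noteq> i \<longrightarrow> i + s \<le> k"
  shows "n ^ s dvd count Z' i"
proof -
  define Z1 where "Z1 = filter_mset (\<lambda>k. k \<noteq> i) Z'"
  have "Z' = replicate_mset (count Z' i) i + Z1"
    unfolding Z1_def by (metis filter_eq_replicate_mset multiset_partition)
  then have "(pow_sum r Z - pow_sum r Z1) * of_nat d ^ i = of_nat (count Z' i) * (r ^ i * of_nat d ^ i)"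
    using eq by (metis add_diff_cancel_right' mult.assoc pow_sum_simps(3,4))
  then have "(pow_sum r Z - pow_sum r Z1) * of_nat d ^ i = of_int (int (count Z' i) * int n ^ i)"
    by (simp add: r_power_times_denom_power)
  moreover have "\<forall>k\<in>#Z1. i + s \<le> k" using Z' unfolding Z1_def by simp
  ultimately have "int n ^ i * int n ^ s dvd int n ^ i * int (count Z' i)"
    using n_power_dvd_if_pow_sum_diff[OF Z] by (simp add: power_add mult.commute)
  then have "int (n ^ s) dvd int (count Z' i)" using n_ge_2 by simp
  then show ?thesis by (simp only: of_nat_dvd_iff)
qed

lemma trade_step:
  assumes N_add: "\<forall>a\<in>N. \<forall>b\<in>N. a + b \<in> N" and "e \<in> N" "0 < e"
    and Z: "set_mset Z \<subseteq> N" and Z': "set_mset Z' \<subseteq> N" and eq: "pow_sum r Z = pow_sum r Z'"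
    and "i \<notin># Z" "i \<in># Z'" and i_min: "\<forall>k\<in>#Z + Z'. i \<le> k" and J_max: "\<forall>k\<in>#Z + Z'. k \<le> J"
  obtains Y where "set_mset Y \<subseteq> N" "pow_sum r Y = pow_sum r Z'" "\<forall>k\<in>#Y. k \<le> J"
    "weight J Y < weight J Z'" "fdist (pow_mset r Z') (pow_mset r Y) \<le> max n d ^ e"
proof -
  obtain s where s: "0 < s" "s \<le> e" "i + s \<in> N" and above: "\<forall>k\<in>N. i < k \<longrightarrow> i + s \<le> k"
    using next_element_of_additive[OF N_add _ \<open>e \<in> N\<close> \<open>0 < e\<close>] \<open>i \<in># Z'\<close> Z' by blast
  have Z_ge: "\<forall>k\<in>#Z. i + s \<le> k" using above Z i_min \<open>i \<notin># Z\<close> by (metis le_neq_implies_less subsetD union_iff)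
  have Z'_ge: "\<forall>k\<in>#Z'. k \<noteq> i \<longrightarrow> i + s \<le> k" using above Z' i_min by (auto simp: order.order_iff_strict)
  have "Z \<noteq> {#}" using eq \<open>i \<in># Z'\<close> r_pos pow_sum_eq_0_iff by fastforce
  then obtain k where "k \<in># Z" by blast
  then have "i + s \<le> J" using Z_ge J_max by (meson le_trans union_iff)
  have "n ^ s dvd count Z' i" using power_dvd_count[OF eq Z_ge Z'_ge] .
  then have R: "replicate_mset (n ^ s) i \<subseteq># Z'"
    using \<open>i \<in># Z'\<close> by (simp add: dvd_imp_le flip: count_le_replicate_mset_subset_eq)
  have "max n d ^ s \<le> max n d ^ e" using s(2) n_ge_2 by (intro power_increasing) auto
  then have "fdist (pow_mset r Z') (pow_mset r (trade i s Z')) \<le> max n d ^ e"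
    using fdist_trade[OF R] by linarith
  moreover have "set_mset (trade i s Z') \<subseteq> N" using Z' s(3) unfolding trade_def by (auto dest: in_diffD)
  moreover have "\<forall>k\<in>#trade i s Z'. k \<le> J"
    using J_max \<open>i + s \<le> J\<close> unfolding trade_def by (auto dest: in_diffD)
  ultimately show thesis
    using that pow_sum_trade[OF R] weight_trade[OF R s(1) \<open>i + s \<le> J\<close>] by blast
qed

lemma fchain_exp_puiseux_bounded:
  assumes N_add: "\<forall>a\<in>N. \<forall>b\<in>N. a + b \<in> N" and "e \<in> N" "0 < e"
  shows "set_mset Z \<subseteq> N \<Longrightarrow> set_mset Z' \<subseteq> N \<Longrightarrow> pow_sum r Z = pow_sum r Z' \<Longrightarrow>
    \<forall>k\<in>#Z + Z'. k \<le> J \<Longrightarrow> fchain (exp_puiseux r N) (max n d ^ e) (pow_mset r Z) (pow_mset r Z')"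
proof (induction "weight J Z + weight J Z'" arbitrary: Z Z' rule: less_induct)
  case less
  let ?M = "exp_puiseux r N" and ?K = "max n d ^ e"
  have atoms: "set_mset (pow_mset r Y) \<subseteq> atoms ?M" if "set_mset Y \<subseteq> N" for Y
    using that by (auto simp: atoms_exp_puiseux pow_mset_def)
  show ?case
  proof (cases "\<exists>k. k \<in># Z \<and> k \<in># Z'")
    case True
    then obtain k Z0 Z0' where Z: "Z = add_mset k Z0" and Z': "Z' = add_mset k Z0'"
      by (metis insert_DiffM)
    have "fchain ?M ?K (pow_mset r Z0) (pow_mset r Z0')"
      using less.hyps[of Z0 Z0'] less.prems unfolding Z Z' by simp
    moreover have "r ^ k \<in> atoms ?M" using less.prems(1) unfolding Z atoms_exp_puiseux by simp
    ultimately show ?thesis unfolding Z Z' by (simp add: fchain_add_mset)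
  next
    case False
    show ?thesis
    proof (cases "Z = {#} \<and> Z' = {#}")
      case True
      then show ?thesis by (simp add: fchain.refl)
    next
      case nonempty: False
      define i where "i = Min (set_mset (Z + Z'))"
      have "i \<in># Z + Z'" unfolding i_def using nonempty by (intro Min_in) auto
      have i_min: "\<forall>k\<in>#Z + Z'. i \<le> k" unfolding i_def by simp
      have chain: "fchain ?M ?K (pow_mset r A) (pow_mset r B)"
        if AB: "(A = Z \<and> B = Z') \<or> (A = Z' \<and> B = Z)" and "i \<in># B" for A B
      proof -
        have "i \<notin># A" using AB False \<open>i \<in># B\<close> by blast
        moreover have "set_mset A \<subseteq> N" "set_mset B \<subseteq> N" "pow_sum r A = pow_sum r B"
          "\<forall>k\<in>#A + B. i \<le> k" "\<forall>k\<in>#A + B. k \<le> J"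
          using AB less.prems i_min by (auto simp: add.commute)
        ultimately obtain Y where Y: "set_mset Y \<subseteq> N" "pow_sum r Y = pow_sum r B" "\<forall>k\<in>#Y. k \<le> J"
          "weight J Y < weight J B" "fdist (pow_mset r B) (pow_mset r Y) \<le> ?K"
          using trade_step[OF N_add \<open>e \<in> N\<close> \<open>0 < e\<close>] \<open>i \<in># B\<close> by blast
        have "\<forall>k\<in>#A + Y. k \<le> J" using Y(3) \<open>\<forall>k\<in>#A + B. k \<le> J\<close> by auto
        moreover have "weight J A + weight J Y < weight J Z + weight J Z'"
          using AB Y(4) by auto
        ultimately have "fchain ?M ?K (pow_mset r A) (pow_mset r Y)"
          using less.hyps[of A Y] Y(1,2) \<open>set_mset A \<subseteq> N\<close> \<open>pow_sum r A = pow_sum r B\<close> by simp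
        moreover have "fchain ?M ?K (pow_mset r Y) (pow_mset r B)"
          using Y atoms[OF \<open>set_mset B \<subseteq> N\<close>]
          by (intro fchain_single) (simp_all add: fdist_commute pow_sum_def)
        ultimately show ?thesis by (rule fchain_trans)
      qed
      show ?thesis
      proof (cases "i \<in># Z'")
        case True
        then show ?thesis using chain by blast
      next
        case False
        then have "fchain ?M ?K (pow_mset r Z') (pow_mset r Z)"
          using chain \<open>i \<in># Z + Z'\<close> by auto
        then show ?thesis using fchain_sym atoms less.prems(2) by blast
      qed
    qed
  qed
qed

lemma fchain_exp_puiseux:
  assumes "\<forall>a\<in>N. \<forall>b\<in>N. a + b \<in> N" "e \<in> N" "0 < e"
    and "set_mset Z \<subseteq> N" "set_mset Z' \<subseteq> N" "pow_sum r Z = pow_sum r Z'"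
  shows "fchain (exp_puiseux r N) (max n d ^ e) (pow_mset r Z) (pow_mset r Z')"
  using fchain_exp_puiseux_bounded[OF assms, of "Max (set_mset (Z + Z'))"] by simp

lemma exponents_ge_if_pow_sum_eq:
  assumes e_min: "\<forall>k\<in>N. 0 < k \<longrightarrow> e \<le> k" and W: "set_mset W \<subseteq> N"
    and eq: "pow_sum r W = of_nat (n ^ e)" and "W \<noteq> replicate_mset (n ^ e) 0"
  shows "\<forall>k\<in>#W. e \<le> k"
proof -
  define c where "c = count W 0"
  define W1 where "W1 = filter_mset (\<lambda>k. k \<noteq> 0) W"
  have W_split: "W = replicate_mset c 0 + W1"
    unfolding c_def W1_def by (metis filter_eq_replicate_mset multiset_partition)
  have W1_ge: "\<forall>k\<in>#W1. e \<le> k" using e_min W unfolding W1_def by auto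
  have W1_sum: "pow_sum r W1 = of_nat (n ^ e) - of_nat c"
    using eq W_split by (metis add_diff_cancel_left' mult.right_neutral pow_sum_simps(3,4) power_0)
  then have "(pow_sum r W1 - pow_sum r {#}) * of_nat d ^ 0 = of_int (int n ^ e - int c)" by simp
  from n_power_dvd_if_pow_sum_diff[OF W1_ge _ this] have "int n ^ e dvd int n ^ e - int c" by simp
  then have "int n ^ e dvd int c" using dvd_diff[OF dvd_refl[of "int n ^ e"]] by fastforce
  then have "n ^ e dvd c" using int_dvd_int_iff[of "n ^ e" c] by simp
  moreover have "c \<le> n ^ e" using W1_sum pow_sum_nonneg[OF r_pos, of W1] by simp
  moreover have "c \<noteq> n ^ e"
  proof
    assume "c = n ^ e"
    then have "W1 = {#}" using W1_sum r_pos by (simp add: pow_sum_eq_0_iff)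
    then show False using W_split \<open>c = n ^ e\<close> assms(4) by simp
  qed
  ultimately have "c = 0" using dvd_imp_le[of "n ^ e" c] by fastforce
  then show ?thesis using W_split W1_ge by simp
qed

text \<open>The factorization of \<open>n ^ e\<close> into copies of \<open>1\<close> shares no atom with any other one,
  which has length at least \<open>d ^ e\<close>.\<close>

lemma fdist_replicate_one_ge:
  assumes e_min: "\<forall>k\<in>N. 0 < k \<longrightarrow> e \<le> k" and "0 < e"
    and w: "w \<in> factorizations (exp_puiseux r N) (of_nat (n ^ e))"
    and "w \<noteq> replicate_mset (n ^ e) 1"
  shows "max n d ^ e \<le> fdist (replicate_mset (n ^ e) 1) w"
proof -
  obtain W where W: "set_mset W \<subseteq> N" "w = pow_mset r W" "pow_sum r W = of_nat (n ^ e)"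
    using factorization_exp_puiseuxE[OF r_pos w] by blast
  have "W \<noteq> replicate_mset (n ^ e) 0" using W(2) assms(4) by auto
  then have W_ge: "\<forall>k\<in>#W. e \<le> k" using exponents_ge_if_pow_sum_eq[OF e_min W(1,3)] by blast
  have "1 \<notin># w" using W(2) W_ge \<open>0 < e\<close> r_power_inj[of _ 0] by (auto simp: pow_mset_def)
  then have "replicate_mset (n ^ e) 1 \<inter># w = {#}" by (simp add: disjunct_not_in)
  then have fd: "fdist (replicate_mset (n ^ e) 1) w = max (n ^ e) (size W)"
    unfolding fdist_def W(2) by simp
  show ?thesis
  proof (cases "d \<le> n")
    case True
    then show ?thesis using fd by (simp add: max_def)
  next
    case False
    then have "r < 1" using r_eq by simp
    then have "\<forall>k\<in>#W. r ^ k \<le> r ^ e" using W_ge r_pos by (auto intro: power_decreasing)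
    then have "pow_sum r W \<le> of_nat (size W) * r ^ e" by (rule pow_sum_le_size_times)
    then have "of_nat (n ^ e) \<le> of_nat (size W) * r ^ e" using W(3) by simp
    then have "of_nat (n ^ e) * of_nat d ^ e \<le> of_nat (size W) * (r ^ e * of_nat d ^ e)"
      using d_ge_2 by (simp add: mult.assoc mult_right_mono)
    then have "of_nat (n ^ e * d ^ e) \<le> (of_nat (size W * n ^ e) :: rat)"
      by (simp add: r_power_times_denom_power)
    then have "d ^ e * n ^ e \<le> size W * n ^ e" by (simp only: of_nat_le_iff mult.commute)
    then have "d ^ e \<le> size W" using n_ge_2 by simp
    then show ?thesis using fd False by (simp add: max_def)
  qed
qed

lemma catenary_elem_exp_puiseux_le:
  assumes "numerical_monoid N"
  shows "catenary_elem (exp_puiseux r N) x \<le> enat (max n d ^ delta0 N)"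
proof (rule catenary_elem_le, intro ballI)
  fix z z' assume z: "z \<in> factorizations (exp_puiseux r N) x"
    and z': "z' \<in> factorizations (exp_puiseux r N) x"
  obtain Z where Z: "set_mset Z \<subseteq> N" "z = pow_mset r Z" "pow_sum r Z = x"
    using factorization_exp_puiseuxE[OF r_pos z] by blast
  obtain Z' where Z': "set_mset Z' \<subseteq> N" "z' = pow_mset r Z'" "pow_sum r Z' = x"
    using factorization_exp_puiseuxE[OF r_pos z'] by blast
  have "\<forall>a\<in>N. \<forall>b\<in>N. a + b \<in> N" using assms unfolding numerical_monoid_def by blast
  then have "fchain (exp_puiseux r N) (max n d ^ delta0 N) z z'"
    using fchain_exp_puiseux delta0_mem[OF assms] Z Z' by simp
  then show "has_chain (exp_puiseux r N) x (enat (max n d ^ delta0 N)) z z'"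
    using z by (rule has_chain_if_fchain)
qed

lemma catenary_elem_exp_puiseux_ge:
  assumes "numerical_monoid N"
  shows "enat (max n d ^ delta0 N) \<le> catenary_elem (exp_puiseux r N) (of_nat (n ^ delta0 N))"
proof (rule catenary_elem_ge)
  let ?e = "delta0 N"
  have "0 \<in> N" using assms unfolding numerical_monoid_def by blast
  then show "replicate_mset (n ^ ?e) 1 \<in> factorizations (exp_puiseux r N) (of_nat (n ^ ?e))"
    unfolding factorizations_def atoms_exp_puiseux by force
  have "of_nat (d ^ ?e) * r ^ ?e = of_nat (n ^ ?e)"
    using r_power_times_denom_power[of ?e] by (simp add: mult.commute)
  then show "replicate_mset (d ^ ?e) (r ^ ?e) \<in> factorizations (exp_puiseux r N) (of_nat (n ^ ?e))"
    unfolding factorizations_def atoms_exp_puiseux using delta0_mem[OF assms] by auto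
  have "r ^ ?e \<noteq> 1" using r_power_inj[of ?e 0] delta0_mem[OF assms] by simp
  then have "1 \<notin># replicate_mset (d ^ ?e) (r ^ ?e)" by simp
  moreover have "1 \<in># replicate_mset (n ^ ?e) (1 :: rat)" using n_ge_2 by simp
  ultimately show "replicate_mset (n ^ ?e) 1 \<noteq> replicate_mset (d ^ ?e) (r ^ ?e)" by metis
  show "\<forall>w\<in>factorizations (exp_puiseux r N) (of_nat (n ^ ?e)). w \<noteq> replicate_mset (n ^ ?e) 1 \<longrightarrow>
      max n d ^ ?e \<le> fdist (replicate_mset (n ^ ?e) 1) w"
    using fdist_replicate_one_ge delta0_le delta0_mem[OF assms] by blast
qed

lemma catenary_degree_exp_puiseux:
  assumes "numerical_monoid N"
  shows "catenary_degree (exp_puiseux r N) = enat (max n d ^ delta0 N)"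
proof (rule antisym)
  show "catenary_degree (exp_puiseux r N) \<le> enat (max n d ^ delta0 N)"
    unfolding catenary_degree_def using catenary_elem_exp_puiseux_le[OF assms] by (rule SUP_least)
  have "of_nat (n ^ delta0 N) \<in> exp_puiseux r N"
    using assms of_nat_in_exp_puiseux unfolding numerical_monoid_def by blast
  then show "enat (max n d ^ delta0 N) \<le> catenary_degree (exp_puiseux r N)"
    unfolding catenary_degree_def using catenary_elem_exp_puiseux_ge[OF assms] by (rule SUP_upper2)
qed

end

section \<open>Degenerate bases\<close>

lemma atoms_exp_puiseux_Nats:
  assumes "r \<in> \<nat>" "0 < r" "0 \<in> N"
  shows "atoms (exp_puiseux r N) \<subseteq> {1}"
proof
  fix a assume a: "a \<in> atoms (exp_puiseux r N)"
  obtain m where "r = of_nat m" using assms(1) by (auto elim: Nats_cases)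
  moreover obtain k where "a = r ^ k" using a atoms_exp_puiseux_subset[OF assms(2)] by blast
  ultimately obtain j where j: "a = of_nat j" by simp
  have "a = of_nat 1 + of_nat (j - 1)" using a j unfolding atoms_def by (cases j) auto
  then have "of_nat 1 = (0::rat) \<or> of_nat (j - 1) = (0::rat)"
    using a of_nat_in_exp_puiseux[OF assms(3)] unfolding atoms_def by blast
  then show "a \<in> {1}" using a j unfolding atoms_def by auto
qed

lemma factorizations_unique_if_atoms_subset_one:
  assumes "atoms M \<subseteq> {1}" "z \<in> factorizations M x" "z' \<in> factorizations M x"
  shows "z = z'"
proof -
  have sum: "sum_mset y = of_nat (size y)" if "set_mset y \<subseteq> {1}" for y :: "rat multiset"
    using that by (induction y) auto
  have "set_mset z \<subseteq> {1}" "set_mset z' \<subseteq> {1}" using assms unfolding factorizations_def by auto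
  moreover from calculation have "of_nat (size z) = (of_nat (size z') :: rat)"
    using assms(2,3) sum unfolding factorizations_def by simp
  ultimately show ?thesis by (metis of_nat_eq_iff set_mset_subset_singletonD)
qed

lemma catenary_degree_exp_puiseux_Nats:
  assumes "r \<in> \<nat>" "0 < r" "0 \<in> N"
  shows "catenary_degree (exp_puiseux r N) = 0"
proof -
  have "catenary_elem (exp_puiseux r N) x = 0" for x
    using factorizations_unique_if_atoms_subset_one[OF atoms_exp_puiseux_Nats[OF assms]]
    by (intro catenary_elem_unique) blast
  then have "catenary_degree (exp_puiseux r N) \<le> 0"
    unfolding catenary_degree_def by (intro SUP_least) simp
  then show ?thesis by simp
qed

text \<open>For \<open>r = 1 / d\<close> every candidate atom splits, as \<open>r ^ j = d ^ e * r ^ (j + e)\<close>.\<close>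

lemma atoms_exp_puiseux_unit_fraction:
  assumes "2 \<le> d" "\<forall>a\<in>N. \<forall>b\<in>N. a + b \<in> N" "e \<in> N" "0 < e"
  shows "atoms (exp_puiseux (1 / of_nat d) N) = {}"
proof (rule ccontr)
  let ?r = "1 / of_nat d :: rat"
  assume "atoms (exp_puiseux ?r N) \<noteq> {}"
  then obtain j where j: "j \<in> N" "?r ^ j \<in> atoms (exp_puiseux ?r N)"
    using atoms_exp_puiseux_subset[of ?r N] assms(1) by fastforce
  have "j + e \<in> N" using j assms(2,3) by blast
  then have "?r ^ (j + e) \<in> exp_puiseux ?r N" "of_nat (d ^ e - 1) * ?r ^ (j + e) \<in> exp_puiseux ?r N"
    using pow_sum_in_exp_puiseux[of "{#j + e#}" N ?r]
      pow_sum_in_exp_puiseux[of "replicate_mset (d ^ e - 1) (j + e)" N ?r] by simp_all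
  moreover have "2 \<le> d ^ e"
    using assms(1,4) power_increasing[of 1 e d] by simp
  moreover have "?r ^ j = of_nat (d ^ e) * ?r ^ (j + e)"
    using assms(1) by (simp add: power_add power_divide)
  then have "?r ^ j = ?r ^ (j + e) + of_nat (d ^ e - 1) * ?r ^ (j + e)"
    using \<open>2 \<le> d ^ e\<close> by (simp add: of_nat_diff algebra_simps)
  moreover have "d ^ e - 1 \<noteq> 0" using \<open>2 \<le> d ^ e\<close> by linarith
  then have "of_nat (d ^ e - 1) * ?r ^ (j + e) \<noteq> 0" "?r ^ (j + e) \<noteq> 0"
    using assms(1) by (simp_all del: of_nat_diff)
  ultimately show False using j(2) unfolding atoms_def by blast
qed

lemma not_atomic_exp_puiseux_unit_fraction:
  assumes "numerical_monoid N" "2 \<le> d"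
  shows "\<not> atomic (exp_puiseux (1 / of_nat d) N)"
proof
  assume "atomic (exp_puiseux (1 / of_nat d) N)"
  moreover have "1 \<in> exp_puiseux (1 / of_nat d) N"
    using assms(1) of_nat_in_exp_puiseux[of N 1] unfolding numerical_monoid_def by simp
  ultimately obtain z where "set_mset z \<subseteq> atoms (exp_puiseux (1 / of_nat d) N)" "sum_mset z = 1"
    unfolding atomic_def factorizations_def by fastforce
  moreover have "atoms (exp_puiseux (1 / of_nat d) N) = {}"
    using assms delta0_mem[OF assms(1)] unfolding numerical_monoid_def
    by (intro atoms_exp_puiseux_unit_fraction) auto
  ultimately show False by simp
qed

lemma numer_denom:
  assumes "0 < r"
  shows "r = of_nat (numer r) / of_nat (denom r)" "coprime (numer r) (denom r)"
    "0 < numer r" "0 < denom r"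
proof -
  obtain a b where q: "quotient_of r = (a, b)" by (cases "quotient_of r")
  have "0 < b" "coprime a b" "r = of_int a / of_int b"
    using quotient_of_denom_pos[OF q] quotient_of_coprime[OF q] quotient_of_div[OF q] by auto
  moreover from calculation have "0 < a" using assms by (simp add: zero_less_divide_iff)
  ultimately show "r = of_nat (numer r) / of_nat (denom r)" "coprime (numer r) (denom r)"
    "0 < numer r" "0 < denom r"
    unfolding numer_def denom_def q by (auto simp: coprime_int_iff[symmetric])
qed

lemma denom_ge_2:
  assumes "0 < r" "r \<notin> \<nat>"
  shows "2 \<le> denom r"
proof (rule ccontr)
  assume "\<not> 2 \<le> denom r"
  then have "denom r = 1" using numer_denom(4)[OF assms(1)] by simp
  then have "r = of_nat (numer r)" using numer_denom(1)[OF assms(1)] by simp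
  then show False using assms(2) of_nat_in_Nats by metis
qed

theorem mainTheorem8:
  fixes r :: rat and N :: "nat set"
  assumes "numerical_monoid N" and "r > 0" and "atomic (exp_puiseux r N)"
  shows "(r \<in> \<nat> \<longrightarrow> catenary_degree (exp_puiseux r N) = 0) \<and>
         (r \<notin> \<nat> \<longrightarrow> catenary_degree (exp_puiseux r N) = enat (max (numer r) (denom r) ^ delta0 N))"
proof (intro conjI impI)
  assume "r \<in> \<nat>"
  then show "catenary_degree (exp_puiseux r N) = 0"
    using catenary_degree_exp_puiseux_Nats assms(1,2) unfolding numerical_monoid_def by blast
next
  assume "r \<notin> \<nat>"
  then have d: "2 \<le> denom r" using denom_ge_2 assms(2) by blast
  have "numer r \<noteq> 1"
  proof
    assume "numer r = 1"
    then have "r = 1 / of_nat (denom r)" using numer_denom(1)[OF assms(2)] by simp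
    then show False using not_atomic_exp_puiseux_unit_fraction[OF assms(1) d] assms(3) by simp
  qed
  then have "2 \<le> numer r" using numer_denom(3)[OF assms(2)] by simp
  then interpret nonintegral_base "numer r" "denom r" r
    using d numer_denom[OF assms(2)] by unfold_locales auto
  show "catenary_degree (exp_puiseux r N) = enat (max (numer r) (denom r) ^ delta0 N)"
    using catenary_degree_exp_puiseux[OF assms(1)] .
qed

end
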